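(* Let $\mathcal{D}=(X,\mathcal{B})$ be a quasi-symmetric $2$-$(56,12,9)$ design with block intersection numbers $0$ and $3$, and let $z\in X$. Then: (i) the derived design $\mathcal{D}^z$ is a $1$-$(55,11,9)$ design with $45$ blocks, and its dual design $(\mathcal{D}^z)^*$ is a $2$-$(45,9,2)$ design; (ii) the residual design $\mathcal{D}_z$ is a $1$-$(55,12,36)$ design with $165$ blocks, and every column of the $55\times 165$ (points by blocks) incidence matrix of $\mathcal{D}_z$ lies in $C^\perp$, where $C$ is the linear code over $GF(3)$ spanned by the columns of the $55\times 45$ (points by blocks) incidence matrix of $\mathcal{D}^z$ (both incidence matrices using the same ordering of the $55$ points of $X\setminus\{z\}$), and $C^\perp$ is its dual with respect to the standard inner product.
   Context: A $t$-$(v,k,\lambda)$ design is a pair $(X,\mathcal{B})$ with $|X|=v$ points and a collection $\mathcal{B}$ of $k$-subsets (blocks) such that every $t$-subset of points lies in exactly $\lambda$ blocks. A $2$-design is quasi-symmetric with intersection numbers $x<y$ if any two distinct blocks meet in exactly $x$ or $y$ points. For a point $z$, the derived design $\mathcal{D}^z$ has point set $X\setminus\{z\}$ and blocks $\{B\setminus\{z\}: B\in\mathcal{B}, z\in B\}$; the residual design $\mathcal{D}_z$ has point set $X\setminus\{z\}$ and blocks $\{B\in\mathcal{B}: z\notin B\}$. The dual design of a design has as points the blocks of the original and as blocks the points, with incidence preserved (incidence matrix transposed). The points-by-blocks incidence matrix $A=(a_{ij})$ has $a_{ij}=1$ if point $i$ lies in block $j$ and $0$ otherwise. *)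

theory Defs
  imports Main "HOL-Library.Numeral_Type"
begin

text \<open>A design is given by a point set X, a finite index set I of blocks and a block
  map B (so repeated blocks are allowed). t-(v,k,lambda) design:\<close>
definition t_design :: "nat \<Rightarrow> nat \<Rightarrow> nat \<Rightarrow> nat \<Rightarrow> 'a set \<Rightarrow> 'i set \<Rightarrow> ('i \<Rightarrow> 'a set) \<Rightarrow> bool" where
  "t_design t v k lam X I B \<longleftrightarrow>
     finite X \<and> card X = v \<and> finite I \<and>
     (\<forall>i\<in>I. B i \<subseteq> X \<and> card (B i) = k) \<and>
     (\<forall>T. T \<subseteq> X \<and> card T = t \<longrightarrow> card {i\<in>I. T \<subseteq> B i} = lam)"

definition quasi_symmetric :: "nat \<Rightarrow> nat \<Rightarrow> nat \<Rightarrow> nat \<Rightarrow> nat \<Rightarrow> 'a set \<Rightarrow> 'i set \<Rightarrow> ('i \<Rightarrow> 'a set) \<Rightarrow> bool" where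
  "quasi_symmetric v k lam x y X I B \<longleftrightarrow>
     t_design 2 v k lam X I B \<and>
     (\<forall>i\<in>I. \<forall>j\<in>I. i \<noteq> j \<longrightarrow> card (B i \<inter> B j) = x \<or> card (B i \<inter> B j) = y)"

text \<open>Derived design at z: points X - {z}, blocks B i - {z} for blocks through z.\<close>
definition derived_idx :: "'i set \<Rightarrow> ('i \<Rightarrow> 'a set) \<Rightarrow> 'a \<Rightarrow> 'i set" where
  "derived_idx I B z = {i\<in>I. z \<in> B i}"
definition derived_blk :: "('i \<Rightarrow> 'a set) \<Rightarrow> 'a \<Rightarrow> 'i \<Rightarrow> 'a set" where
  "derived_blk B z i = B i - {z}"

text \<open>Residual design at z: points X - {z}, blocks B i for blocks not through z.\<close>
definition residual_idx :: "'i set \<Rightarrow> ('i \<Rightarrow> 'a set) \<Rightarrow> 'a \<Rightarrow> 'i set" where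
  "residual_idx I B z = {i\<in>I. z \<notin> B i}"

text \<open>Dual design of (X,I,B): points I, blocks indexed by X, block of x = {i. x in B i}.\<close>
definition dual_blk :: "'i set \<Rightarrow> ('i \<Rightarrow> 'a set) \<Rightarrow> 'a \<Rightarrow> 'i set" where
  "dual_blk I B x = {i\<in>I. x \<in> B i}"

text \<open>Column of the points-by-blocks incidence matrix over GF(3) (type 3 = Z/3Z),
  vectors indexed by points.\<close>
definition inc_col :: "('i \<Rightarrow> 'a set) \<Rightarrow> 'i \<Rightarrow> 'a \<Rightarrow> 3" where
  "inc_col B i p = (if p \<in> B i then 1 else 0)"

definition code_span :: "'a set \<Rightarrow> 'i set \<Rightarrow> ('i \<Rightarrow> 'a \<Rightarrow> 3) \<Rightarrow> ('a \<Rightarrow> 3) set" where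
  "code_span P J col = {v. \<exists>c. \<forall>p\<in>P. v p = (\<Sum>j\<in>J. c j * col j p)}"

definition dual_code :: "'a set \<Rightarrow> ('a \<Rightarrow> 3) set \<Rightarrow> ('a \<Rightarrow> 3) set" where
  "dual_code P C = {w. \<forall>v\<in>C. (\<Sum>p\<in>P. w p * v p) = 0}"

end

theory Submission
  imports Defs
begin

text \<open>Counting flags gives b = 210 blocks and replication number r = 45, so the derived
  design at z has 45 blocks and the residual one 165. Two blocks through z meet in z, hence
  in exactly 3 points, so in the dual of the derived design two points lie in exactly 2 common
  blocks. A block missing z meets every block through z in 0 or 3 points, both divisible by 3,
  which makes its incidence vector orthogonal over GF(3) to every column spanning C.\<close>

lemma t_design_1_intro:
  assumes "finite X" "card X = v" "finite I" "\<And>i. i \<in> I \<Longrightarrow> B i \<subseteq> X \<and> card (B i) = k"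
    and "\<And>p. p \<in> X \<Longrightarrow> card {i\<in>I. p \<in> B i} = r"
  shows "t_design 1 v k r X I B"
  unfolding t_design_def
proof (intro conjI allI impI ballI)
  fix T assume "T \<subseteq> X \<and> card T = 1"
  then obtain p where "T = {p}" "p \<in> X" by (auto simp: card_1_singleton_iff)
  then show "card {i\<in>I. T \<subseteq> B i} = r" using assms(5) by simp
qed (use assms in auto)

lemma t_design_1_replication:
  assumes "t_design 1 v k r X I B" "p \<in> X"
  shows "card {i\<in>I. p \<in> B i} = r"
  using assms unfolding t_design_def by (auto dest!: spec[of _ "{p}"])

lemma t_design_2_pair:
  assumes "t_design 2 v k lam X I B" "p \<in> X" "q \<in> X" "p \<noteq> q"
  shows "card {i\<in>I. p \<in> B i \<and> q \<in> B i} = lam"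
proof -
  have "card {i\<in>I. {p, q} \<subseteq> B i} = lam"
    using assms unfolding t_design_def by (auto dest!: spec[of _ "{p, q}"])
  moreover have "{i\<in>I. {p, q} \<subseteq> B i} = {i\<in>I. p \<in> B i \<and> q \<in> B i}" by auto
  ultimately show ?thesis by simp
qed

lemma sum_card_blocks_through:
  assumes "finite X" "finite I" "\<And>i. i \<in> I \<Longrightarrow> B i \<subseteq> X"
  shows "(\<Sum>x\<in>X. card {i\<in>I. x \<in> B i}) = (\<Sum>i\<in>I. card (B i))"
proof -
  have "(\<Sum>x\<in>X. card {i\<in>I. x \<in> B i}) = (\<Sum>x\<in>X. \<Sum>i\<in>I. if x \<in> B i then 1 else (0::nat))"
    using assms by (simp add: sum.If_cases Int_def)
  also have "\<dots> = (\<Sum>i\<in>I. \<Sum>x\<in>X. if x \<in> B i then 1 else (0::nat))"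
    by (rule sum.swap)
  also have "\<dots> = (\<Sum>i\<in>I. card (X \<inter> B i))"
    using assms by (simp add: sum.If_cases)
  also have "\<dots> = (\<Sum>i\<in>I. card (B i))"
    using assms(3) by (intro sum.cong) (auto simp: Int_absorb1)
  finally show ?thesis .
qed

lemma t_design_1_card_blocks:
  assumes "t_design 1 v k r X I B"
  shows "card I * k = v * r"
proof -
  have "(\<Sum>x\<in>X. card {i\<in>I. x \<in> B i}) = (\<Sum>i\<in>I. card (B i))"
    using assms unfolding t_design_def by (intro sum_card_blocks_through) auto
  moreover have "(\<Sum>x\<in>X. card {i\<in>I. x \<in> B i}) = v * r"
    using assms t_design_1_replication[OF assms] unfolding t_design_def by simp
  moreover have "(\<Sum>i\<in>I. card (B i)) = card I * k"
    using assms unfolding t_design_def by simp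
  ultimately show ?thesis by simp
qed

lemma t_design_derived:
  assumes "t_design 2 v k lam X I B" "z \<in> X"
  shows "t_design 1 (v - 1) (k - 1) lam (X - {z}) (derived_idx I B z) (derived_blk B z)"
proof (rule t_design_1_intro)
  fix i assume "i \<in> derived_idx I B z"
  moreover have "finite (B i)" if "i \<in> I"
    using assms(1) that finite_subset unfolding t_design_def by blast
  ultimately show "derived_blk B z i \<subseteq> X - {z} \<and> card (derived_blk B z i) = k - 1"
    using assms(1) unfolding t_design_def derived_idx_def derived_blk_def by auto
next
  fix p assume p: "p \<in> X - {z}"
  have "{i \<in> derived_idx I B z. p \<in> derived_blk B z i} = {i\<in>I. z \<in> B i \<and> p \<in> B i}"
    using p by (auto simp: derived_idx_def derived_blk_def)
  then show "card {i \<in> derived_idx I B z. p \<in> derived_blk B z i} = lam"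
    using t_design_2_pair[OF assms(1) assms(2), of p] p by auto
qed (use assms in \<open>auto simp: t_design_def derived_idx_def\<close>)

lemma card_derived_idx:
  assumes "t_design 2 v k lam X I B" "z \<in> X"
  shows "card (derived_idx I B z) * (k - 1) = (v - 1) * lam"
  using t_design_1_card_blocks[OF t_design_derived[OF assms]] .

lemma t_design_2_imp_1:
  assumes "t_design 2 v k lam X I B" "r * (k - 1) = (v - 1) * lam" "1 < k"
  shows "t_design 1 v k r X I B"
proof (rule t_design_1_intro)
  fix p assume "p \<in> X"
  then have "card {i\<in>I. p \<in> B i} * (k - 1) = r * (k - 1)"
    using card_derived_idx[OF assms(1)] assms(2) by (simp add: derived_idx_def)
  then show "card {i\<in>I. p \<in> B i} = r" using assms(3) by simp
qed (use assms(1) in \<open>auto simp: t_design_def\<close>)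

lemma t_design_residual:
  assumes "t_design 2 v k lam X I B" "t_design 1 v k r X I B" "z \<in> X"
  shows "t_design 1 (v - 1) k (r - lam) (X - {z}) (residual_idx I B z) B"
proof (rule t_design_1_intro)
  fix p assume p: "p \<in> X - {z}"
  have "{i \<in> residual_idx I B z. p \<in> B i} = {i\<in>I. p \<in> B i} - {i\<in>I. z \<in> B i \<and> p \<in> B i}"
    by (auto simp: residual_idx_def)
  moreover have "card ({i\<in>I. p \<in> B i} - {i\<in>I. z \<in> B i \<and> p \<in> B i}) = r - lam"
    using p assms(1) t_design_1_replication[OF assms(2), of p] t_design_2_pair[OF assms(1) assms(3), of p]
    by (subst card_Diff_subset) (auto simp: t_design_def)
  ultimately show "card {i \<in> residual_idx I B z. p \<in> B i} = r - lam" by simp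
qed (use assms in \<open>auto simp: t_design_def residual_idx_def\<close>)

lemma card_residual_idx:
  assumes "finite I"
  shows "card (residual_idx I B z) = card I - card (derived_idx I B z)"
proof -
  have "residual_idx I B z = I - derived_idx I B z" "derived_idx I B z \<subseteq> I"
    by (auto simp: residual_idx_def derived_idx_def)
  then show ?thesis using assms by (simp add: card_Diff_subset finite_subset)
qed

lemma t_design_dual_derived:
  assumes "quasi_symmetric v k lam 0 y X I B" "z \<in> X" "card (derived_idx I B z) = r"
  shows "t_design 2 r lam (y - 1) (derived_idx I B z) (X - {z})
           (dual_blk (derived_idx I B z) (derived_blk B z))"
proof -
  have des: "t_design 2 v k lam X I B"
    and fin: "finite X" "finite I" and blk: "\<And>i. i \<in> I \<Longrightarrow> B i \<subseteq> X"
    and qs: "\<And>i j. i \<in> I \<Longrightarrow> j \<in> I \<Longrightarrow> i \<noteq> j \<Longrightarrow> card (B i \<inter> B j) = 0 \<or> card (B i \<inter> B j) = y"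
    using assms(1) unfolding quasi_symmetric_def t_design_def by auto
  show ?thesis
    unfolding t_design_def
  proof (intro conjI allI impI ballI)
    fix p assume p: "p \<in> X - {z}"
    have "dual_blk (derived_idx I B z) (derived_blk B z) p = {i\<in>I. z \<in> B i \<and> p \<in> B i}"
      using p by (auto simp: dual_blk_def derived_idx_def derived_blk_def)
    then show "card (dual_blk (derived_idx I B z) (derived_blk B z) p) = lam"
      using t_design_2_pair[OF des assms(2), of p] p by auto
  next
    fix T assume T: "T \<subseteq> derived_idx I B z \<and> card T = 2"
    then obtain i j where ij: "T = {i, j}" "i \<noteq> j" by (auto simp: card_2_iff)
    have ijI: "i \<in> I" "z \<in> B i" "j \<in> I" "z \<in> B j" using T ij by (auto simp: derived_idx_def)
    have fBi: "finite (B i \<inter> B j)" using blk[OF ijI(1)] fin finite_subset by blast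
    have "{p \<in> X - {z}. T \<subseteq> dual_blk (derived_idx I B z) (derived_blk B z) p} = B i \<inter> B j - {z}"
      using ij ijI blk by (auto simp: dual_blk_def derived_idx_def derived_blk_def)
    moreover have "card (B i \<inter> B j) = y"
      using qs[OF ijI(1) ijI(3) ij(2)] ijI fBi by auto
    ultimately show "card {p \<in> X - {z}. T \<subseteq> dual_blk (derived_idx I B z) (derived_blk B z) p} = y - 1"
      using ijI fBi by simp
  qed (use assms fin in \<open>auto simp: dual_blk_def derived_idx_def\<close>)
qed

lemma in_dual_code_spanI:
  assumes "finite J" "\<And>j. j \<in> J \<Longrightarrow> (\<Sum>p\<in>P. w p * col j p) = 0"
  shows "w \<in> dual_code P (code_span P J col)"
  unfolding dual_code_def
proof (intro CollectI ballI)
  fix v assume "v \<in> code_span P J col"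
  then obtain c where c: "\<And>p. p \<in> P \<Longrightarrow> v p = (\<Sum>j\<in>J. c j * col j p)"
    by (auto simp: code_span_def)
  have "(\<Sum>p\<in>P. w p * v p) = (\<Sum>p\<in>P. \<Sum>j\<in>J. c j * (w p * col j p))"
    using c by (intro sum.cong refl) (simp add: sum_distrib_left algebra_simps)
  also have "\<dots> = (\<Sum>j\<in>J. c j * (\<Sum>p\<in>P. w p * col j p))"
    by (subst sum.swap) (simp add: sum_distrib_left)
  also have "\<dots> = 0" by (simp add: assms(2))
  finally show "(\<Sum>p\<in>P. w p * v p) = 0" .
qed

lemma inner_inc_col:
  assumes "finite P"
  shows "(\<Sum>p\<in>P. inc_col B i p * inc_col B' j p) = of_nat (card (P \<inter> B i \<inter> B' j))"
proof -
  have "(\<Sum>p\<in>P. inc_col B i p * inc_col B' j p) = (\<Sum>p\<in>P. if p \<in> B i \<inter> B' j then 1 else 0)"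
    by (intro sum.cong) (auto simp: inc_col_def)
  also have "\<dots> = of_nat (card (P \<inter> B i \<inter> B' j))"
    using assms by (simp add: sum.If_cases Int_def)
  finally show ?thesis .
qed

lemma residual_col_in_dual_derived_code:
  assumes "quasi_symmetric v k lam x y X I B" "of_nat x = (0::3)" "of_nat y = (0::3)"
    and "j \<in> residual_idx I B z"
  shows "inc_col B j \<in> dual_code (X - {z})
           (code_span (X - {z}) (derived_idx I B z) (inc_col (derived_blk B z)))"
proof (rule in_dual_code_spanI)
  have fin: "finite X" "finite I" and blk: "\<And>i. i \<in> I \<Longrightarrow> B i \<subseteq> X"
    and qs: "\<And>i j. i \<in> I \<Longrightarrow> j \<in> I \<Longrightarrow> i \<noteq> j \<Longrightarrow> card (B i \<inter> B j) = x \<or> card (B i \<inter> B j) = y"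
    using assms(1) unfolding quasi_symmetric_def t_design_def by auto
  then show "finite (derived_idx I B z)" by (simp add: derived_idx_def)
  have jI: "j \<in> I" "z \<notin> B j" using assms(4) by (auto simp: residual_idx_def)
  fix i assume "i \<in> derived_idx I B z"
  then have iI: "i \<in> I" "z \<in> B i" by (auto simp: derived_idx_def)
  have "(\<Sum>p\<in>X - {z}. inc_col B j p * inc_col (derived_blk B z) i p)
      = of_nat (card ((X - {z}) \<inter> B j \<inter> derived_blk B z i))"
    using fin by (simp add: inner_inc_col)
  also have "(X - {z}) \<inter> B j \<inter> derived_blk B z i = B j \<inter> B i"
    using blk[OF jI(1)] jI by (auto simp: derived_blk_def)
  also have "(of_nat (card (B j \<inter> B i)) :: 3) = 0"
    using qs[OF jI(1) iI(1)] iI jI assms(2,3) by fastforce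
  finally show "(\<Sum>p\<in>X - {z}. inc_col B j p * inc_col (derived_blk B z) i p) = 0" .
qed

theorem lemma1:
  fixes X :: "'a set" and I :: "'i set" and B :: "'i \<Rightarrow> 'a set" and z :: 'a
  assumes "quasi_symmetric 56 12 9 0 3 X I B"
    and "z \<in> X"
  shows "t_design 1 55 11 9 (X - {z}) (derived_idx I B z) (derived_blk B z)
       \<and> card (derived_idx I B z) = 45
       \<and> t_design 2 45 9 2 (derived_idx I B z) (X - {z}) (dual_blk (derived_idx I B z) (derived_blk B z))
       \<and> t_design 1 55 12 36 (X - {z}) (residual_idx I B z) B
       \<and> card (residual_idx I B z) = 165
       \<and> (\<forall>j\<in>residual_idx I B z.
            inc_col B j \<in> dual_code (X - {z})
              (code_span (X - {z}) (derived_idx I B z) (inc_col (derived_blk B z))))"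
proof -
  have des: "t_design 2 56 12 9 X I B"
    using assms(1) by (simp add: quasi_symmetric_def)
  have derived: "card (derived_idx I B z) = 45"
    using card_derived_idx[OF des assms(2)] by simp
  have des1: "t_design 1 56 12 45 X I B"
    using des by (rule t_design_2_imp_1) simp_all
  have "card I = 210"
    using t_design_1_card_blocks[OF des1] by simp
  then have "card (residual_idx I B z) = 165"
    using des derived by (simp add: card_residual_idx t_design_def)
  moreover have "t_design 1 55 12 36 (X - {z}) (residual_idx I B z) B"
    using t_design_residual[OF des des1 assms(2)] by simp
  moreover have "t_design 2 45 9 2 (derived_idx I B z) (X - {z}) (dual_blk (derived_idx I B z) (derived_blk B z))"
    using t_design_dual_derived[OF assms derived] by simp
  ultimately show ?thesis
    using t_design_derived[OF des assms(2)] derived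
      residual_col_in_dual_derived_code[OF assms(1)] by simp
qed

end
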